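(* Let $G$ be a group and $(\mathcal B_1,\Phi_1)\subseteq(\mathcal B_2,\Phi_2)$ a partial subaction of $G$ on generalized Boolean algebras, $\Phi_k=(\{\mathcal I_{k,t}\},\{\phi_{k,t}\})$, with $\mathcal B_1$ an ideal of $\mathcal B_2$. Let $$\mathcal B=\Big\{\bigcup_{i=1}^n\phi_{2,g_i}(V_i)\in\mathcal B_2: n\ge1,\ g_i\in G,\ V_i\in\mathcal B_1\cap\mathcal I_{2,g_i^{-1}}\Big\}.$$ Then $\mathcal B$ is a generalized Boolean algebra with $\mathcal B_1\subseteq\mathcal B\subseteq\mathcal B_2$, and $\mathcal B$ is an ideal of $\mathcal B_2$. Moreover, setting $\mathcal I_g=\mathcal B\cap\mathcal I_{2,g}$ (so $\mathcal I_{1,g}\subseteq\mathcal I_g\subseteq\mathcal I_{2,g}$), the restrictions $\phi_g$ of $\phi_{2,g}$ to $\mathcal I_{g^{-1}}$ are well-defined maps $\mathcal I_{g^{-1}}\to\mathcal I_g$ forming a partial action $\Phi$ of $G$ on $\mathcal B$, and $(\mathcal B_1,\Phi_1)\subseteq(\mathcal B,\Phi)\subseteq(\mathcal B_2,\Phi_2)$ are partial subactions.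
   Context: A generalized Boolean algebra is a distributive relatively complemented lattice with least element $0$ (joins $\cup$); an ideal is a subset closed under finite joins and under meets with arbitrary elements. A partial action $\Phi$ of $G$ on $\mathcal B$ consists of ideals $\mathcal I_t$ and lattice isomorphisms $\phi_t:\mathcal I_{t^{-1}}\to\mathcal I_t$ with $\mathcal I_e=\mathcal B$, $\phi_e=\mathrm{id}$, $\phi_s(\mathcal I_{s^{-1}}\cap\mathcal I_t)=\mathcal I_s\cap\mathcal I_{st}$, and $\phi_s\phi_t=\phi_{st}$ where defined. A partial subaction $(\mathcal B_1,\Phi_1)\subseteq(\mathcal B_2,\Phi_2)$: $\mathcal B_1$ is a sub generalized Boolean algebra of $\mathcal B_2$, $\mathcal I_{1,t}\subseteq\mathcal I_{2,t}$, and $\phi_{2,t}$ restricts to $\phi_{1,t}$ on $\mathcal I_{1,t^{-1}}$. *)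

theory Defs
  imports "HOL-Algebra.Group"
begin

text \<open>A generalized Boolean algebra is represented by a carrier set S inside an
ambient type together with join j, meet m and least element z (shared by all
subalgebras considered).  The order is a \<le> b iff m a b = a.\<close>

definition gba :: "'a set \<Rightarrow> ('a \<Rightarrow> 'a \<Rightarrow> 'a) \<Rightarrow> ('a \<Rightarrow> 'a \<Rightarrow> 'a) \<Rightarrow> 'a \<Rightarrow> bool" where
  "gba S j m z \<longleftrightarrow>
     z \<in> S \<and>
     (\<forall>a\<in>S. \<forall>b\<in>S. j a b \<in> S \<and> m a b \<in> S) \<and>
     (\<forall>a\<in>S. \<forall>b\<in>S. j a b = j b a \<and> m a b = m b a) \<and>
     (\<forall>a\<in>S. \<forall>b\<in>S. \<forall>c\<in>S. j (j a b) c = j a (j b c) \<and> m (m a b) c = m a (m b c)) \<and>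
     (\<forall>a\<in>S. \<forall>b\<in>S. j a (m a b) = a \<and> m a (j a b) = a) \<and>
     (\<forall>a\<in>S. \<forall>b\<in>S. \<forall>c\<in>S. m a (j b c) = j (m a b) (m a c)) \<and>
     (\<forall>a\<in>S. m z a = z) \<and>
     (\<forall>a\<in>S. \<forall>b\<in>S. \<forall>c\<in>S. m a b = a \<and> m b c = b \<longrightarrow>
         (\<exists>x\<in>S. m b x = a \<and> j b x = c))"

definition sub_gba :: "'a set \<Rightarrow> 'a set \<Rightarrow> ('a \<Rightarrow> 'a \<Rightarrow> 'a) \<Rightarrow> ('a \<Rightarrow> 'a \<Rightarrow> 'a) \<Rightarrow> 'a \<Rightarrow> bool" where
  "sub_gba S1 S2 j m z \<longleftrightarrow> gba S2 j m z \<and> S1 \<subseteq> S2 \<and> gba S1 j m z"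

definition gba_ideal :: "'a set \<Rightarrow> 'a set \<Rightarrow> ('a \<Rightarrow> 'a \<Rightarrow> 'a) \<Rightarrow> ('a \<Rightarrow> 'a \<Rightarrow> 'a) \<Rightarrow> 'a \<Rightarrow> bool" where
  "gba_ideal I S j m z \<longleftrightarrow> I \<subseteq> S \<and> z \<in> I \<and>
     (\<forall>a\<in>I. \<forall>b\<in>I. j a b \<in> I) \<and> (\<forall>a\<in>I. \<forall>b\<in>S. m a b \<in> I)"

definition partial_action ::
  "('g, 'b) monoid_scheme \<Rightarrow> 'a set \<Rightarrow> ('a \<Rightarrow> 'a \<Rightarrow> 'a) \<Rightarrow> ('a \<Rightarrow> 'a \<Rightarrow> 'a) \<Rightarrow> 'a
    \<Rightarrow> ('g \<Rightarrow> 'a set) \<Rightarrow> ('g \<Rightarrow> 'a \<Rightarrow> 'a) \<Rightarrow> bool" where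
  "partial_action G S j m z I phi \<longleftrightarrow>
     gba S j m z \<and>
     (\<forall>t\<in>carrier G. gba_ideal (I t) S j m z) \<and>
     (\<forall>t\<in>carrier G. bij_betw (phi t) (I (inv\<^bsub>G\<^esub> t)) (I t)) \<and>
     (\<forall>t\<in>carrier G. \<forall>x\<in>I (inv\<^bsub>G\<^esub> t). \<forall>y\<in>I (inv\<^bsub>G\<^esub> t).
         phi t (j x y) = j (phi t x) (phi t y) \<and> phi t (m x y) = m (phi t x) (phi t y)) \<and>
     I \<one>\<^bsub>G\<^esub> = S \<and> (\<forall>x\<in>S. phi \<one>\<^bsub>G\<^esub> x = x) \<and>
     (\<forall>s\<in>carrier G. \<forall>t\<in>carrier G.
         phi s ` (I (inv\<^bsub>G\<^esub> s) \<inter> I t) = I s \<inter> I (s \<otimes>\<^bsub>G\<^esub> t)) \<and>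
     (\<forall>s\<in>carrier G. \<forall>t\<in>carrier G. \<forall>x.
         x \<in> I (inv\<^bsub>G\<^esub> t) \<and> phi t x \<in> I (inv\<^bsub>G\<^esub> s) \<longrightarrow>
         phi s (phi t x) = phi (s \<otimes>\<^bsub>G\<^esub> t) x)"

definition partial_subaction ::
  "('g, 'b) monoid_scheme \<Rightarrow> ('a \<Rightarrow> 'a \<Rightarrow> 'a) \<Rightarrow> ('a \<Rightarrow> 'a \<Rightarrow> 'a) \<Rightarrow> 'a
    \<Rightarrow> 'a set \<Rightarrow> ('g \<Rightarrow> 'a set) \<Rightarrow> ('g \<Rightarrow> 'a \<Rightarrow> 'a)
    \<Rightarrow> 'a set \<Rightarrow> ('g \<Rightarrow> 'a set) \<Rightarrow> ('g \<Rightarrow> 'a \<Rightarrow> 'a) \<Rightarrow> bool" where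
  "partial_subaction G j m z S1 I1 phi1 S2 I2 phi2 \<longleftrightarrow>
     partial_action G S1 j m z I1 phi1 \<and> partial_action G S2 j m z I2 phi2 \<and>
     sub_gba S1 S2 j m z \<and>
     (\<forall>t\<in>carrier G. I1 t \<subseteq> I2 t) \<and>
     (\<forall>t\<in>carrier G. \<forall>x\<in>I1 (inv\<^bsub>G\<^esub> t). phi2 t x = phi1 t x)"

fun joins :: "('a \<Rightarrow> 'a \<Rightarrow> 'a) \<Rightarrow> 'a list \<Rightarrow> 'a" where
  "joins j [] = undefined"
| "joins j [x] = x"
| "joins j (x # y # xs) = j x (joins j (y # xs))"

definition generated_set ::
  "('g, 'b) monoid_scheme \<Rightarrow> ('a \<Rightarrow> 'a \<Rightarrow> 'a) \<Rightarrow> 'a set \<Rightarrow> 'a set \<Rightarrow> ('g \<Rightarrow> 'a set)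
    \<Rightarrow> ('g \<Rightarrow> 'a \<Rightarrow> 'a) \<Rightarrow> 'a set" where
  "generated_set G j S1 S2 I2 phi2 =
     {x \<in> S2. \<exists>ps :: ('g \<times> 'a) list. ps \<noteq> [] \<and>
        (\<forall>(g, V)\<in>set ps. g \<in> carrier G \<and> V \<in> S1 \<inter> I2 (inv\<^bsub>G\<^esub> g)) \<and>
        x = joins j (map (\<lambda>(g, V). phi2 g V) ps)}"

end

(* The translates phi2 g V, with V in B1 and V in I2 (g^-1), form a subset of B2 that is closed
   under meets with arbitrary elements of B2 -- an element below phi2 g V is phi2 g U with U
   below V, so U lies in the ideal B1 -- and under the partial maps phi2 h, because
   phi2 h (phi2 g V) = phi2 (h g) V.  Meet-closedness makes the set B of finite joins of
   translates an ideal of B2.  An element of B lying in the ideal I2 (h^-1) is a join of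
   translates lying there, so phi2 h maps B \<inter> I2 (h^-1) into B.  A partial action restricts
   to every such invariant ideal, which gives the partial action on B and both subactions. *)

theory Submission
  imports Defs
begin

section \<open>Finite joins\<close>

lemma joins_Cons: "xs \<noteq> [] \<Longrightarrow> joins j (x # xs) = j x (joins j xs)"
  by (cases xs) auto

lemma joins_closed:
  assumes "\<And>a b. a \<in> S \<Longrightarrow> b \<in> S \<Longrightarrow> j a b \<in> S"
  shows "xs \<noteq> [] \<Longrightarrow> set xs \<subseteq> S \<Longrightarrow> joins j xs \<in> S"
  by (induction xs rule: list_nonempty_induct) (simp_all add: joins_Cons assms)

lemma joins_append:
  assumes closed: "\<And>a b. a \<in> S \<Longrightarrow> b \<in> S \<Longrightarrow> j a b \<in> S"
    and assoc: "\<And>a b c. a \<in> S \<Longrightarrow> b \<in> S \<Longrightarrow> c \<in> S \<Longrightarrow> j (j a b) c = j a (j b c)"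
    and ys: "ys \<noteq> []" "set ys \<subseteq> S"
  shows "xs \<noteq> [] \<Longrightarrow> set xs \<subseteq> S \<Longrightarrow> joins j (xs @ ys) = j (joins j xs) (joins j ys)"
proof (induction xs rule: list_nonempty_induct)
  case (single x)
  then show ?case using ys by (simp add: joins_Cons)
next
  case (cons x xs)
  have "joins j ((x # xs) @ ys) = j x (j (joins j xs) (joins j ys))"
    using cons by (simp add: joins_Cons)
  also have "\<dots> = j (j x (joins j xs)) (joins j ys)"
    using cons ys joins_closed[OF closed] assoc by simp
  finally show ?case using cons by (simp add: joins_Cons)
qed

lemma joins_hom:
  assumes "\<And>a b. a \<in> S \<Longrightarrow> b \<in> S \<Longrightarrow> j a b \<in> S"
    and "\<And>a b. a \<in> S \<Longrightarrow> b \<in> S \<Longrightarrow> f (j a b) = j (f a) (f b)"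
  shows "xs \<noteq> [] \<Longrightarrow> set xs \<subseteq> S \<Longrightarrow> f (joins j xs) = joins j (map f xs)"
  by (induction xs rule: list_nonempty_induct)
    (simp_all add: joins_Cons joins_closed[of S j] assms)

definition finite_joins :: "('a \<Rightarrow> 'a \<Rightarrow> 'a) \<Rightarrow> 'a set \<Rightarrow> 'a set" where
  "finite_joins j X = {joins j xs | xs. xs \<noteq> [] \<and> set xs \<subseteq> X}"

lemma finite_joinsI: "xs \<noteq> [] \<Longrightarrow> set xs \<subseteq> X \<Longrightarrow> joins j xs \<in> finite_joins j X"
  unfolding finite_joins_def by blast

lemma finite_joinsE:
  assumes "x \<in> finite_joins j X"
  obtains xs where "xs \<noteq> []" "set xs \<subseteq> X" "x = joins j xs"
  using assms unfolding finite_joins_def by blast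

lemma finite_joins_mono: "X \<subseteq> Y \<Longrightarrow> finite_joins j X \<subseteq> finite_joins j Y"
  unfolding finite_joins_def by blast

lemma subset_finite_joins: "X \<subseteq> finite_joins j X"
  using finite_joinsI[of "[_]"] by fastforce

lemma finite_joins_subset:
  assumes "\<And>a b. a \<in> S \<Longrightarrow> b \<in> S \<Longrightarrow> j a b \<in> S" and "X \<subseteq> S"
  shows "finite_joins j X \<subseteq> S"
  using joins_closed[of S j, OF assms(1)] assms(2) by (auto elim!: finite_joinsE)

lemma join_in_finite_joins:
  assumes closed: "\<And>a b. a \<in> S \<Longrightarrow> b \<in> S \<Longrightarrow> j a b \<in> S"
    and assoc: "\<And>a b c. a \<in> S \<Longrightarrow> b \<in> S \<Longrightarrow> c \<in> S \<Longrightarrow> j (j a b) c = j a (j b c)"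
    and "X \<subseteq> S" "a \<in> finite_joins j X" "b \<in> finite_joins j X"
  shows "j a b \<in> finite_joins j X"
proof -
  obtain xs ys where "xs \<noteq> []" "set xs \<subseteq> X" "a = joins j xs"
    and "ys \<noteq> []" "set ys \<subseteq> X" "b = joins j ys"
    using assms(4,5) by (metis finite_joinsE)
  moreover from this have "joins j (xs @ ys) = j a b"
    using joins_append[OF closed assoc] \<open>X \<subseteq> S\<close> by blast
  ultimately show ?thesis by (metis finite_joinsI Nil_is_append_conv set_append Un_least)
qed

lemma hom_in_finite_joins:
  assumes "\<And>a b. a \<in> D \<Longrightarrow> b \<in> D \<Longrightarrow> j a b \<in> D"
    and "\<And>a b. a \<in> D \<Longrightarrow> b \<in> D \<Longrightarrow> f (j a b) = j (f a) (f b)"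
    and "X \<subseteq> D" "x \<in> finite_joins j X"
  shows "f x \<in> finite_joins j (f ` X)"
proof -
  obtain xs where "xs \<noteq> []" "set xs \<subseteq> X" "x = joins j xs"
    using assms(4) by (rule finite_joinsE)
  then show ?thesis
    using joins_hom[of D j f, OF assms(1,2)] assms(3) finite_joinsI[of "map f xs" "f ` X" j] by auto
qed

section \<open>Generalized Boolean algebras and their ideals\<close>

lemma
  assumes "gba S j m z" "a \<in> S" "b \<in> S"
  shows gba_join_closed: "j a b \<in> S"
    and gba_join_commute: "j a b = j b a"
    and gba_meet_commute: "m a b = m b a"
    and gba_meet_join_absorb: "m a (j a b) = a"
  using assms unfolding gba_def by blast+

lemma gba_meet_assoc:
  "gba S j m z \<Longrightarrow> a \<in> S \<Longrightarrow> b \<in> S \<Longrightarrow> c \<in> S \<Longrightarrow> m (m a b) c = m a (m b c)"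
  unfolding gba_def by blast

lemma gba_join_assoc:
  "gba S j m z \<Longrightarrow> a \<in> S \<Longrightarrow> b \<in> S \<Longrightarrow> c \<in> S \<Longrightarrow> j (j a b) c = j a (j b c)"
  unfolding gba_def by blast

lemma gba_meet_idem:
  assumes "gba S j m z" "a \<in> S"
  shows "m a a = a"
proof -
  have "m a (j a (m a a)) = a" "j a (m a a) = a"
    using assms unfolding gba_def by blast+
  then show ?thesis by simp
qed

lemma gba_meet_joins:
  assumes gba: "gba S j m z" and "xs \<noteq> []" "set xs \<subseteq> S" "y \<in> S"
  shows "m (joins j xs) y = joins j (map (\<lambda>x. m x y) xs)"
proof (rule joins_hom[of S j, OF gba_join_closed[OF gba] _ assms(2,3)])
  fix a b assume "a \<in> S" "b \<in> S"
  moreover have "m y (j a b) = j (m y a) (m y b)"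
    using gba \<open>a \<in> S\<close> \<open>b \<in> S\<close> \<open>y \<in> S\<close> unfolding gba_def by blast
  ultimately show "m (j a b) y = j (m a y) (m b y)"
    using gba \<open>y \<in> S\<close> by (simp add: gba_meet_commute gba_join_closed)
qed

text \<open>A relative complement of b in the interval from a to c taken in S lies below c, hence in
  the ideal.\<close>
lemma gba_ideal_gba:
  assumes gba: "gba S j m z" and ideal: "gba_ideal B S j m z"
  shows "gba B j m z"
proof -
  have sub: "B \<subseteq> S" and meet: "\<And>a b. a \<in> B \<Longrightarrow> b \<in> S \<Longrightarrow> m a b \<in> B"
    using ideal unfolding gba_ideal_def by auto
  have "\<exists>x\<in>B. m b x = a \<and> j b x = c"
    if "a \<in> B" "b \<in> B" "c \<in> B" "m a b = a" "m b c = b" for a b c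
  proof -
    have "\<exists>x\<in>S. m b x = a \<and> j b x = c"
      using gba that sub unfolding gba_def by blast
    then obtain x where x: "x \<in> S" "m b x = a" "j b x = c" by blast
    have "b \<in> S" using that sub by blast
    have "m c x = m x (j x b)"
      using x \<open>b \<in> S\<close> gba_meet_commute[OF gba] gba_join_commute[OF gba] gba_join_closed[OF gba]
      by metis
    also have "\<dots> = x" using gba_meet_join_absorb[OF gba x(1) \<open>b \<in> S\<close>] .
    finally show ?thesis using meet[of c x] that x by auto
  qed
  then show ?thesis
    using gba ideal sub unfolding gba_def gba_ideal_def by (auto simp: subset_iff)
qed

lemma gba_ideal_finite_joins:
  assumes gba: "gba S j m z" and "X \<subseteq> S" "z \<in> X"
    and meet: "\<And>x y. x \<in> X \<Longrightarrow> y \<in> S \<Longrightarrow> m x y \<in> X"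
  shows "gba_ideal (finite_joins j X) S j m z"
  unfolding gba_ideal_def
proof (intro conjI ballI)
  show "finite_joins j X \<subseteq> S"
    by (rule finite_joins_subset[OF gba_join_closed[OF gba] \<open>X \<subseteq> S\<close>])
  show "z \<in> finite_joins j X" using subset_finite_joins[of X j] \<open>z \<in> X\<close> by blast
  show "j a b \<in> finite_joins j X" if "a \<in> finite_joins j X" "b \<in> finite_joins j X" for a b
    using join_in_finite_joins[OF gba_join_closed[OF gba] gba_join_assoc[OF gba] \<open>X \<subseteq> S\<close> that] .
  show "m a y \<in> finite_joins j X" if "a \<in> finite_joins j X" "y \<in> S" for a y
  proof -
    obtain xs where xs: "xs \<noteq> []" "set xs \<subseteq> X" "a = joins j xs"
      using \<open>a \<in> finite_joins j X\<close> by (rule finite_joinsE)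
    have "joins j (map (\<lambda>x. m x y) xs) \<in> finite_joins j X"
      by (rule finite_joinsI) (use xs(1,2) meet \<open>y \<in> S\<close> in auto)
    moreover have "m a y = joins j (map (\<lambda>x. m x y) xs)"
      using gba_meet_joins[OF gba xs(1) _ \<open>y \<in> S\<close>] xs(2,3) \<open>X \<subseteq> S\<close> by simp
    ultimately show ?thesis by (simp only:)
  qed
qed

text \<open>Writing x = m x x and distributing, the joinands of x may be cut down into any ideal
  containing x.\<close>
lemma finite_joins_inter_ideal:
  assumes gba: "gba S j m z" and "X \<subseteq> S"
    and meet: "\<And>x y. x \<in> X \<Longrightarrow> y \<in> S \<Longrightarrow> m x y \<in> X"
    and ideal: "gba_ideal D S j m z" and x: "x \<in> finite_joins j X" "x \<in> D"
  shows "x \<in> finite_joins j (X \<inter> D)"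
proof -
  obtain xs where xs: "xs \<noteq> []" "set xs \<subseteq> X" "x = joins j xs"
    using x(1) by (rule finite_joinsE)
  have "x \<in> S" using ideal x(2) unfolding gba_ideal_def by blast
  have in_X_inter_D: "m p x \<in> X \<inter> D" if "p \<in> set xs" for p
  proof -
    have "p \<in> S" using that xs(2) assms(2) by blast
    have "m p x \<in> X" using meet that xs(2) \<open>x \<in> S\<close> by blast
    moreover have "m x p \<in> D" using ideal x(2) \<open>p \<in> S\<close> unfolding gba_ideal_def by blast
    ultimately show ?thesis using gba_meet_commute[OF gba \<open>p \<in> S\<close> \<open>x \<in> S\<close>] by simp
  qed
  have "joins j (map (\<lambda>p. m p x) xs) = m (joins j xs) x"
    using gba_meet_joins[OF gba xs(1) _ \<open>x \<in> S\<close>] xs(2) \<open>X \<subseteq> S\<close> by simp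
  also have "\<dots> = x" using gba_meet_idem[OF gba \<open>x \<in> S\<close>] xs(3) by simp
  finally have "joins j (map (\<lambda>p. m p x) xs) = x" .
  moreover have "joins j (map (\<lambda>p. m p x) xs) \<in> finite_joins j (X \<inter> D)"
    by (rule finite_joinsI) (use xs(1) in_X_inter_D in auto)
  ultimately show ?thesis by (simp only:)
qed

lemma gba_ideal_inter:
  assumes "gba_ideal B S j m z" "gba_ideal J S j m z"
  shows "gba_ideal (B \<inter> J) B j m z"
  using assms unfolding gba_ideal_def by blast

section \<open>Restricting a partial action to an invariant ideal\<close>

locale group_partial_action = group G for G :: "('g, 'c) monoid_scheme" (structure) +
  fixes S :: "'a set" and j m :: "'a \<Rightarrow> 'a \<Rightarrow> 'a" and z :: 'a
    and I :: "'g \<Rightarrow> 'a set" and phi :: "'g \<Rightarrow> 'a \<Rightarrow> 'a"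
  assumes partial_action: "partial_action G S j m z I phi"
begin

lemma gba: "gba S j m z"
  and I_ideal: "t \<in> carrier G \<Longrightarrow> gba_ideal (I t) S j m z"
  and phi_bij: "t \<in> carrier G \<Longrightarrow> bij_betw (phi t) (I (inv t)) (I t)"
  and phi_join: "t \<in> carrier G \<Longrightarrow> x \<in> I (inv t) \<Longrightarrow> y \<in> I (inv t) \<Longrightarrow>
    phi t (j x y) = j (phi t x) (phi t y)"
  and phi_meet: "t \<in> carrier G \<Longrightarrow> x \<in> I (inv t) \<Longrightarrow> y \<in> I (inv t) \<Longrightarrow>
    phi t (m x y) = m (phi t x) (phi t y)"
  and I_one: "I \<one> = S"
  and phi_one: "x \<in> S \<Longrightarrow> phi \<one> x = x"
  and phi_image_inter: "s \<in> carrier G \<Longrightarrow> t \<in> carrier G \<Longrightarrow>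
    phi s ` (I (inv s) \<inter> I t) = I s \<inter> I (s \<otimes> t)"
  and phi_phi: "s \<in> carrier G \<Longrightarrow> t \<in> carrier G \<Longrightarrow> x \<in> I (inv t) \<Longrightarrow> phi t x \<in> I (inv s) \<Longrightarrow>
    phi s (phi t x) = phi (s \<otimes> t) x"
  using partial_action unfolding partial_action_def by simp_all

lemma I_subset: "t \<in> carrier G \<Longrightarrow> I t \<subseteq> S"
  using I_ideal unfolding gba_ideal_def by blast

lemma phi_in_I: "t \<in> carrier G \<Longrightarrow> x \<in> I (inv t) \<Longrightarrow> phi t x \<in> I t"
  using phi_bij bij_betwE by metis

lemma phi_inv_phi:
  assumes t: "t \<in> carrier G" and x: "x \<in> I (inv t)"
  shows "phi (inv t) (phi t x) = x"
proof -
  have "phi (inv t) (phi t x) = phi (inv t \<otimes> t) x"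
    using phi_phi phi_in_I t x by simp
  then show ?thesis using phi_one I_subset t x by auto
qed

lemma phi_phi_inv: "t \<in> carrier G \<Longrightarrow> x \<in> I t \<Longrightarrow> phi t (phi (inv t) x) = x"
  using phi_inv_phi[of "inv t" x] by simp

lemma in_I_inv_mult:
  assumes s: "s \<in> carrier G" and t: "t \<in> carrier G"
    and x: "x \<in> I (inv t)" and "phi t x \<in> I (inv s)"
  shows "x \<in> I (inv (s \<otimes> t))"
proof -
  have "phi t x \<in> I (inv (inv t)) \<inter> I (inv s)" using phi_in_I assms by simp
  then have "phi (inv t) (phi t x) \<in> I (inv t \<otimes> inv s)"
    using phi_image_inter[of "inv t" "inv s"] s t by blast
  then show ?thesis using phi_inv_phi t x s by (simp add: inv_mult_group)
qed

lemma invariant_image_inter: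
  assumes invariant: "\<And>g x. g \<in> carrier G \<Longrightarrow> x \<in> B \<Longrightarrow> x \<in> I (inv g) \<Longrightarrow> phi g x \<in> B"
    and s: "s \<in> carrier G" and t: "t \<in> carrier G"
  shows "phi s ` (B \<inter> I (inv s) \<inter> I t) = B \<inter> I s \<inter> I (s \<otimes> t)"
proof
  show "phi s ` (B \<inter> I (inv s) \<inter> I t) \<subseteq> B \<inter> I s \<inter> I (s \<otimes> t)"
  proof (rule image_subsetI)
    fix x assume x: "x \<in> B \<inter> I (inv s) \<inter> I t"
    then have "phi s x \<in> I s \<inter> I (s \<otimes> t)" using phi_image_inter[OF s t] by blast
    moreover have "phi s x \<in> B" using invariant[OF s] x by blast
    ultimately show "phi s x \<in> B \<inter> I s \<inter> I (s \<otimes> t)" by blast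
  qed
  show "B \<inter> I s \<inter> I (s \<otimes> t) \<subseteq> phi s ` (B \<inter> I (inv s) \<inter> I t)"
  proof
    fix y assume y: "y \<in> B \<inter> I s \<inter> I (s \<otimes> t)"
    then have "y \<in> phi s ` (I (inv s) \<inter> I t)" using phi_image_inter[OF s t] by blast
    then obtain x where x: "x \<in> I (inv s) \<inter> I t" "y = phi s x" by blast
    have "x = phi (inv s) y" using phi_inv_phi s x by simp
    moreover have "phi (inv s) y \<in> B" using invariant[of "inv s" y] s y by simp
    ultimately show "y \<in> phi s ` (B \<inter> I (inv s) \<inter> I t)" using x by blast
  qed
qed

context
  fixes B :: "'a set"
  assumes ideal: "gba_ideal B S j m z"
    and invariant: "\<And>g x. g \<in> carrier G \<Longrightarrow> x \<in> B \<Longrightarrow> x \<in> I (inv g) \<Longrightarrow> phi g x \<in> B"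
begin

lemma phi_bij_betw_invariant:
  assumes t: "t \<in> carrier G"
  shows "bij_betw (phi t) (B \<inter> I (inv t)) (B \<inter> I t)"
proof (rule bij_betw_subset[OF phi_bij[OF t] Int_lower2])
  have "B \<inter> I (inv t) \<inter> I \<one> = B \<inter> I (inv t)" using I_subset[of "inv t"] t I_one by blast
  then show "phi t ` (B \<inter> I (inv t)) = B \<inter> I t"
    using invariant_image_inter[OF invariant t one_closed] t by simp
qed

lemma partial_action_restrict:
  "partial_action G B j m z (\<lambda>g. B \<inter> I g) (\<lambda>g. restrict (phi g) (B \<inter> I (inv g)))"
  unfolding partial_action_def
proof (intro conjI ballI allI impI)
  show "gba B j m z" using gba_ideal_gba[OF gba ideal] .
  show "gba_ideal (B \<inter> I t) B j m z" if "t \<in> carrier G" for t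
    using gba_ideal_inter[OF ideal I_ideal[OF that]] .
  show "bij_betw (restrict (phi t) (B \<inter> I (inv t))) (B \<inter> I (inv t)) (B \<inter> I t)"
    if "t \<in> carrier G" for t
    using phi_bij_betw_invariant[OF that] by simp
  fix t x y assume t: "t \<in> carrier G" and x: "x \<in> B \<inter> I (inv t)" and y: "y \<in> B \<inter> I (inv t)"
  then have "j x y \<in> B \<inter> I (inv t)" "m x y \<in> B \<inter> I (inv t)"
    using gba_ideal_inter[OF ideal I_ideal[of "inv t"]] unfolding gba_ideal_def by auto
  then show "restrict (phi t) (B \<inter> I (inv t)) (j x y) =
      j (restrict (phi t) (B \<inter> I (inv t)) x) (restrict (phi t) (B \<inter> I (inv t)) y)"
    and "restrict (phi t) (B \<inter> I (inv t)) (m x y) =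
      m (restrict (phi t) (B \<inter> I (inv t)) x) (restrict (phi t) (B \<inter> I (inv t)) y)"
    using phi_join phi_meet t x y by simp_all
next
  show "B \<inter> I \<one> = B" using I_one ideal unfolding gba_ideal_def by blast
next
  fix x assume "x \<in> B"
  then show "restrict (phi \<one>) (B \<inter> I (inv \<one>)) x = x"
    using I_one phi_one ideal unfolding gba_ideal_def by auto
next
  fix s t assume s: "s \<in> carrier G" and t: "t \<in> carrier G"
  have "restrict (phi s) (B \<inter> I (inv s)) ` (B \<inter> I (inv s) \<inter> (B \<inter> I t))
      = phi s ` (B \<inter> I (inv s) \<inter> I t)"
    by (rule image_cong) auto
  also have "\<dots> = B \<inter> I s \<inter> (B \<inter> I (s \<otimes> t))"
    using invariant_image_inter[OF invariant s t] by blast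
  finally show "restrict (phi s) (B \<inter> I (inv s)) ` (B \<inter> I (inv s) \<inter> (B \<inter> I t))
      = B \<inter> I s \<inter> (B \<inter> I (s \<otimes> t))" .
next
  fix s t x assume s: "s \<in> carrier G" and t: "t \<in> carrier G"
    and x: "x \<in> B \<inter> I (inv t) \<and> restrict (phi t) (B \<inter> I (inv t)) x \<in> B \<inter> I (inv s)"
  have x_dom: "x \<in> B \<inter> I (inv t)" using x by blast
  then have phi_x_dom: "phi t x \<in> B \<inter> I (inv s)" using x by simp
  then have "x \<in> I (inv (s \<otimes> t))" using in_I_inv_mult s t x by blast
  then show "restrict (phi s) (B \<inter> I (inv s)) (restrict (phi t) (B \<inter> I (inv t)) x)
      = restrict (phi (s \<otimes> t)) (B \<inter> I (inv (s \<otimes> t))) x"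
    using phi_phi s t x_dom phi_x_dom by simp
qed

lemma partial_subaction_restrict:
  "partial_subaction G j m z B (\<lambda>g. B \<inter> I g) (\<lambda>g. restrict (phi g) (B \<inter> I (inv g))) S I phi"
  unfolding partial_subaction_def sub_gba_def
proof (intro conjI ballI)
  show "partial_action G B j m z (\<lambda>g. B \<inter> I g) (\<lambda>g. restrict (phi g) (B \<inter> I (inv g)))"
    using partial_action_restrict .
  show "B \<subseteq> S" using ideal unfolding gba_ideal_def by blast
  show "gba B j m z" using gba_ideal_gba[OF gba ideal] .
qed (simp_all add: partial_action gba)

lemma partial_subaction_into_restrict:
  assumes sub: "partial_subaction G j m z B1 I1 phi1 S I phi" and "B1 \<subseteq> B"
  shows "partial_subaction G j m z B1 I1 phi1
    B (\<lambda>g. B \<inter> I g) (\<lambda>g. restrict (phi g) (B \<inter> I (inv g)))"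
proof -
  have pa1: "partial_action G B1 j m z I1 phi1"
    and I1_I: "\<And>t. t \<in> carrier G \<Longrightarrow> I1 t \<subseteq> I t"
    and phi1: "\<And>t x. t \<in> carrier G \<Longrightarrow> x \<in> I1 (inv t) \<Longrightarrow> phi t x = phi1 t x"
    using sub unfolding partial_subaction_def by simp_all
  have "I1 t \<subseteq> B1" if "t \<in> carrier G" for t
    using pa1 that unfolding partial_action_def gba_ideal_def by simp
  then have I1_B_I: "I1 t \<subseteq> B \<inter> I t" if "t \<in> carrier G" for t
    using I1_I that \<open>B1 \<subseteq> B\<close> by blast
  show ?thesis
    unfolding partial_subaction_def sub_gba_def
  proof (intro conjI ballI)
    show "gba B1 j m z" using pa1 unfolding partial_action_def by simp
    show "restrict (phi t) (B \<inter> I (inv t)) x = phi1 t x"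
      if "t \<in> carrier G" "x \<in> I1 (inv t)" for t x
      using that I1_B_I[of "inv t"] phi1 by auto
  qed (use pa1 partial_action_restrict gba_ideal_gba[OF gba ideal] I1_B_I
      \<open>B1 \<subseteq> B\<close> in simp_all)
qed

end

section \<open>The ideal generated by the translates of an ideal\<close>

definition translates :: "'a set \<Rightarrow> 'a set" where
  "translates B1 = (\<lambda>(g, V). phi g V) ` (SIGMA g:carrier G. B1 \<inter> I (inv g))"

lemma translatesI: "g \<in> carrier G \<Longrightarrow> V \<in> B1 \<Longrightarrow> V \<in> I (inv g) \<Longrightarrow> phi g V \<in> translates B1"
  unfolding translates_def by force

lemma translatesE:
  assumes "x \<in> translates B1"
  obtains g V where "g \<in> carrier G" "V \<in> B1" "V \<in> I (inv g)" "x = phi g V"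
  using assms unfolding translates_def by (auto intro: that)

lemma translates_subset: "translates B1 \<subseteq> S"
proof
  fix x assume "x \<in> translates B1"
  then obtain g V where "g \<in> carrier G" "V \<in> I (inv g)" "x = phi g V" by (rule translatesE)
  then show "x \<in> S" using phi_in_I I_subset by blast
qed

lemma subset_translates: "B1 \<subseteq> S \<Longrightarrow> B1 \<subseteq> translates B1"
proof
  fix V assume "B1 \<subseteq> S" "V \<in> B1"
  then have "phi \<one> V \<in> translates B1" using translatesI[of \<one> V B1] I_one by auto
  then show "V \<in> translates B1" using phi_one \<open>B1 \<subseteq> S\<close> \<open>V \<in> B1\<close> by auto
qed

text \<open>Below phi g V every element is phi g U for some U below V, and U lies in the ideal B1
  with V.\<close>
lemma meet_translates:
  assumes B1: "gba_ideal B1 S j m z" and x: "x \<in> translates B1" and y: "y \<in> S"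
  shows "m x y \<in> translates B1"
proof -
  obtain g V where g: "g \<in> carrier G" and V: "V \<in> B1" "V \<in> I (inv g)" and x_eq: "x = phi g V"
    using x by (rule translatesE)
  have "x \<in> I g" using phi_in_I g V x_eq by simp
  then have "x \<in> S" using I_subset g by blast
  define w where "w = m x y"
  have w: "w \<in> I g" unfolding w_def using I_ideal[OF g] \<open>x \<in> I g\<close> y unfolding gba_ideal_def by blast
  define U where "U = phi (inv g) w"
  have U: "U \<in> I (inv g)" "phi g U = w"
    unfolding U_def using phi_in_I[of "inv g" w] phi_phi_inv[OF g w] g w by simp_all
  have "m x w = m (m x x) y" unfolding w_def using gba_meet_assoc[OF gba \<open>x \<in> S\<close> \<open>x \<in> S\<close> y] ..
  then have "m x w = w" unfolding w_def using gba_meet_idem[OF gba \<open>x \<in> S\<close>] by simp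
  then have "U = m (phi (inv g) x) (phi (inv g) w)"
    unfolding U_def using phi_meet[of "inv g" x w] g \<open>x \<in> I g\<close> w by simp
  also have "\<dots> = m V U" unfolding U_def x_eq using phi_inv_phi g V by simp
  finally have U_eq: "U = m V U" .
  have "m V U \<in> B1" using B1 V I_subset[of "inv g"] g U unfolding gba_ideal_def by blast
  then have "U \<in> B1" by (subst U_eq)
  then show ?thesis using translatesI[OF g _ U(1)] U(2) unfolding w_def by simp
qed

lemma phi_translates:
  assumes g: "g \<in> carrier G" and x: "x \<in> translates B1" "x \<in> I (inv g)"
  shows "phi g x \<in> translates B1"
proof -
  obtain h V where h: "h \<in> carrier G" and V: "V \<in> B1" "V \<in> I (inv h)" and x_eq: "x = phi h V"
    using x(1) by (rule translatesE)
  have "V \<in> I (inv (g \<otimes> h))" using in_I_inv_mult g h V x x_eq by blast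
  moreover have "phi g x = phi (g \<otimes> h) V" using phi_phi g h V x x_eq by simp
  ultimately show ?thesis using translatesI g h V by simp
qed

lemma generated_set_eq_finite_joins: "generated_set G j B1 S I phi = finite_joins j (translates B1)"
proof -
  let ?f = "\<lambda>(g, V). phi g V" and ?A = "SIGMA g:carrier G. B1 \<inter> I (inv g)"
  show ?thesis
  proof (rule subset_antisym; rule subsetI)
    fix x assume "x \<in> generated_set G j B1 S I phi"
    then obtain ps where ps: "ps \<noteq> []" "\<forall>(g, V)\<in>set ps. g \<in> carrier G \<and> V \<in> B1 \<inter> I (inv g)"
      and x: "x = joins j (map ?f ps)"
      unfolding generated_set_def by blast
    have "?f p \<in> translates B1" if "p \<in> set ps" for p
      using ps(2) that by (cases p) (auto intro: translatesI)
    then have "set (map ?f ps) \<subseteq> translates B1" by auto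
    then show "x \<in> finite_joins j (translates B1)"
      using finite_joinsI[of "map ?f ps" _ j] ps(1) x by simp
  next
    fix x assume x: "x \<in> finite_joins j (translates B1)"
    then obtain xs where xs: "xs \<noteq> []" "set xs \<subseteq> ?f ` ?A" "x = joins j xs"
      unfolding translates_def by (rule finite_joinsE)
    have "xs \<in> lists (?f ` ?A)" using xs(2) by auto
    then have "xs \<in> map ?f ` lists ?A" by (simp only: lists_image)
    then obtain ps where ps: "set ps \<subseteq> ?A" "xs = map ?f ps" by (auto simp: lists_eq_set)
    have "x \<in> S" using x finite_joins_subset[of S j, OF gba_join_closed[OF gba] translates_subset] by blast
    moreover have "\<forall>(g, V)\<in>set ps. g \<in> carrier G \<and> V \<in> B1 \<inter> I (inv g)" using ps(1) by blast
    ultimately show "x \<in> generated_set G j B1 S I phi"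
      unfolding generated_set_def using xs(1,3) ps(2) by blast
  qed
qed

lemma generated_set_ideal:
  assumes "gba_ideal B1 S j m z"
  shows "gba_ideal (generated_set G j B1 S I phi) S j m z"
proof -
  have "B1 \<subseteq> S" "z \<in> B1" using assms unfolding gba_ideal_def by blast+
  then have "z \<in> translates B1" using subset_translates by blast
  then show ?thesis
    unfolding generated_set_eq_finite_joins
    using gba_ideal_finite_joins[OF gba translates_subset] meet_translates[OF assms] by blast
qed

lemma subset_generated_set: "B1 \<subseteq> S \<Longrightarrow> B1 \<subseteq> generated_set G j B1 S I phi"
  unfolding generated_set_eq_finite_joins
  using subset_translates subset_finite_joins by (metis subset_trans)

text \<open>A join of translates lying in I (inv g) is a join of translates in I (inv g), on which
  phi g is a join homomorphism.\<close>
lemma phi_generated_set: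
  assumes B1: "gba_ideal B1 S j m z" and g: "g \<in> carrier G"
    and x: "x \<in> generated_set G j B1 S I phi" "x \<in> I (inv g)"
  shows "phi g x \<in> generated_set G j B1 S I phi"
proof -
  have "x \<in> finite_joins j (translates B1 \<inter> I (inv g))"
    using finite_joins_inter_ideal[OF gba translates_subset meet_translates[OF B1] I_ideal] g x
    unfolding generated_set_eq_finite_joins by simp
  moreover have "\<And>a b. a \<in> I (inv g) \<Longrightarrow> b \<in> I (inv g) \<Longrightarrow> j a b \<in> I (inv g)"
    using I_ideal[of "inv g"] g unfolding gba_ideal_def by simp
  ultimately have "phi g x \<in> finite_joins j (phi g ` (translates B1 \<inter> I (inv g)))"
    using hom_in_finite_joins[of "I (inv g)" j "phi g"] phi_join[OF g] by blast
  also have "\<dots> \<subseteq> finite_joins j (translates B1)"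
    using phi_translates[OF g] by (intro finite_joins_mono) blast
  finally show ?thesis unfolding generated_set_eq_finite_joins .
qed

end

theorem lemma4p11:
  fixes G :: "('g, 'c) monoid_scheme"
    and j m :: "'a \<Rightarrow> 'a \<Rightarrow> 'a" and z :: 'a
    and B1 B2 :: "'a set" and I1 I2 :: "'g \<Rightarrow> 'a set" and phi1 phi2 :: "'g \<Rightarrow> 'a \<Rightarrow> 'a"
  assumes "group G"
    and "partial_subaction G j m z B1 I1 phi1 B2 I2 phi2"
    and "gba_ideal B1 B2 j m z"
  defines "B \<equiv> generated_set G j B1 B2 I2 phi2"
    and "I \<equiv> (\<lambda>g. generated_set G j B1 B2 I2 phi2 \<inter> I2 g)"
    and "phi \<equiv> (\<lambda>g. restrict (phi2 g) (generated_set G j B1 B2 I2 phi2 \<inter> I2 (inv\<^bsub>G\<^esub> g)))"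
  shows "gba B j m z \<and> B1 \<subseteq> B \<and> B \<subseteq> B2 \<and> gba_ideal B B2 j m z
     \<and> (\<forall>g\<in>carrier G. I1 g \<subseteq> I g \<and> I g \<subseteq> I2 g)
     \<and> (\<forall>g\<in>carrier G. phi g \<in> I (inv\<^bsub>G\<^esub> g) \<rightarrow> I g)
     \<and> partial_action G B j m z I phi
     \<and> partial_subaction G j m z B1 I1 phi1 B I phi
     \<and> partial_subaction G j m z B I phi B2 I2 phi2"
proof -
  interpret group_partial_action G B2 j m z I2 phi2
    using assms(1,2) unfolding group_partial_action_def group_partial_action_axioms_def
      partial_subaction_def by blast
  have ideal: "gba_ideal B B2 j m z"
    unfolding B_def using generated_set_ideal[OF assms(3)] .
  have "B1 \<subseteq> B"
    unfolding B_def using subset_generated_set assms(3) unfolding gba_ideal_def by blast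
  have invariant: "\<And>g x. g \<in> carrier G \<Longrightarrow> x \<in> B \<Longrightarrow> x \<in> I2 (inv\<^bsub>G\<^esub> g) \<Longrightarrow> phi2 g x \<in> B"
    unfolding B_def using phi_generated_set[OF assms(3)] .
  have I_eq: "I = (\<lambda>g. B \<inter> I2 g)" and phi_eq: "phi = (\<lambda>g. restrict (phi2 g) (B \<inter> I2 (inv\<^bsub>G\<^esub> g)))"
    unfolding I_def phi_def B_def by simp_all
  have action: "partial_action G B j m z I phi"
    unfolding I_eq phi_eq by (rule partial_action_restrict[OF ideal invariant])
  have below: "partial_subaction G j m z B1 I1 phi1 B I phi"
    unfolding I_eq phi_eq
    by (rule partial_subaction_into_restrict[OF ideal invariant assms(2) \<open>B1 \<subseteq> B\<close>])
  have above: "partial_subaction G j m z B I phi B2 I2 phi2"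
    unfolding I_eq phi_eq by (rule partial_subaction_restrict[OF ideal invariant])
  have "\<forall>g\<in>carrier G. phi g \<in> I (inv\<^bsub>G\<^esub> g) \<rightarrow> I g"
    using action unfolding partial_action_def by (simp add: bij_betw_imp_funcset)
  with ideal \<open>B1 \<subseteq> B\<close> action below above show ?thesis
    unfolding partial_subaction_def sub_gba_def gba_ideal_def by blast
qed

end
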